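(* For generic $a,b\in\mathbb{C}$ define $\mathbf Q_0^{(3)}(n;a;b)=1+\tfrac{3n}{a}$ and, for $k\ge1$, $$a(\tfrac12-k-b)(\tfrac12-k+b)\,\mathbf Q_k^{(3)}(n;a;b)=\frac{3n+2k+a}{2k+a}(n+a)(n+\tfrac12-k-b)(n+\tfrac12-k+b)\,\mathbf Q_{k-1}^{(3)}(n;a+1;b)$$ $$\qquad+8\,\frac{3n-4k+a}{2k+a}\,n\,(n-\tfrac14+\tfrac k2+\tfrac a2+\tfrac b2)(n-\tfrac14+\tfrac k2+\tfrac a2-\tfrac b2)\,\mathbf Q_{k-1}^{(3)}(n-1;a+1;b).$$ Then $\mathbf Q_k^{(3)}$ is a polynomial of degree $1+4k$ in $n$, and for all integers $k\ge0$, near $x=0$, $${}_3F_2\!\left[\begin{matrix}\tfrac13+\tfrac{2k}3+\tfrac a3,\ \tfrac23+\tfrac{2k}3+\tfrac a3,\ 1+\tfrac{2k}3+\tfrac a3\\ \tfrac34+\tfrac k2+\tfrac a2+\tfrac b2,\ \tfrac34+\tfrac k2+\tfrac a2-\tfrac b2\end{matrix}\,\Big|\,-\frac{27x}{(1-4x)^3}\right]$$ $$=(1+8x)^{-1-2k}(1-4x)^{1+2k+a}\sum_{n=0}^\infty\frac{(a)_n(\tfrac12-k-b)_n(\tfrac12-k+b)_n}{n!\,(\tfrac34+\tfrac k2+\tfrac a2+\tfrac b2)_n(\tfrac34+\tfrac k2+\tfrac a2-\tfrac b2)_n}\,\mathbf Q_k^{(3)}(n;a;b)\,x^n.$$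
   Context: $(c)_n$ denotes the Pochhammer symbol, $(c)_0=1$; ${}_pF_q$ is the generalized hypergeometric series. Parameters are generic so that no lower parameter is a nonpositive integer and no division by zero occurs in the recurrence. *)

theory Defs
  imports "HOL-Analysis.Analysis" "HOL-Computational_Algebra.Polynomial"
begin

definition hyp3F2 :: "complex \<Rightarrow> complex \<Rightarrow> complex \<Rightarrow> complex \<Rightarrow> complex \<Rightarrow> complex \<Rightarrow> complex" where
  "hyp3F2 a1 a2 a3 b1 b2 z =
     (\<Sum>n. pochhammer a1 n * pochhammer a2 n * pochhammer a3 n
           / (pochhammer b1 n * pochhammer b2 n * fact n) * z ^ n)"

fun Q3 :: "nat \<Rightarrow> complex \<Rightarrow> complex \<Rightarrow> complex \<Rightarrow> complex" where
  "Q3 0 n a b = 1 + 3 * n / a"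
| "Q3 (Suc k) n a b =
     ( (3* n + 2* of_nat (Suc k) + a) / (2* of_nat (Suc k) + a) * (n + a)
         * (n + 1/2 - of_nat (Suc k) - b) * (n + 1/2 - of_nat (Suc k) + b) * Q3 k n (a+1) b
     + 8 * (3* n - 4* of_nat (Suc k) + a) / (2* of_nat (Suc k) + a) * n
         * (n - 1/4 + of_nat (Suc k)/2 + a/2 + b/2) * (n - 1/4 + of_nat (Suc k)/2 + a/2 - b/2)
         * Q3 k (n - 1) (a+1) b )
     / (a * (1/2 - of_nat (Suc k) - b) * (1/2 - of_nat (Suc k) + b))"

end

theory Submission
  imports Defs "HOL-Complex_Analysis.Laurent_Convergence"
begin

text \<open>
  Write \<open>V\<^sub>s = (1 - 4x)\<^sup>s\<close>, \<open>Z = -27x/(1 - 4x)\<^sup>3\<close> and \<open>\<theta> = x d/dx\<close>.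
  Since \<open>(1 + 8x) Z = (1 - 4x) \<theta>Z\<close>, every power series \<open>F\<close> satisfies
  \<open>(3\<theta> + B)(V\<^sub>-\<^sub>B \<cdot> F\<circ>Z) = B (1 + 8x) V\<^sub>-\<^sub>B\<^sub>-\<^sub>1 \<cdot> (F + (3/B)\<theta>F)\<circ>Z\<close>, and for
  \<open>F\<^sub>A = \<^sub>3F\<^sub>2[A/3, (A+1)/3, (A+2)/3; c, d]\<close> contiguity gives \<open>F\<^sub>A + (3/A)\<theta>F\<^sub>A = F\<^sub>A\<^sub>+\<^sub>1\<close>.

  For \<open>k = 0\<close>, comparing coefficients of \<open>V\<^sub>-\<^sub>a \<cdot> F\<^sub>a\<circ>Z\<close> with the weights of the theorem
  leads to a terminating sum, which a Zeilberger certificate telescopes (a cubic transformation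
  of Bailey type); as \<open>Q\<^sub>0 = 1 + 3n/a\<close> acts as \<open>1 + (3/a)\<theta>\<close>, the intertwining relation and
  contiguity settle this case. The recursion defining \<open>Q\<^sub>k\<^sub>+\<^sub>1\<close> says that the generating
  series \<open>G\<^sub>k\<^sub>+\<^sub>1(a)\<close> is obtained from \<open>G = G\<^sub>k(a + 1)\<close> by
  \<open>(3\<theta> + B) G + 8x (3\<theta> + B - 3(2k + 1)) G\<close>; writing \<open>G = (1 + 8x)\<^sup>2\<^sup>k\<^sup>+\<^sup>1 Y\<close> this is
  \<open>(1 + 8x)\<^sup>2\<^sup>k\<^sup>+\<^sup>2 (3\<theta> + B) Y\<close>, and the intertwining relation supplies the last factor. The degree of
  \<open>Q\<^sub>k\<close> follows from the recursion: its leading coefficient is multiplied by \<open>27/B\<close> at each step.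
\<close>

abbreviation fps_theta :: "'a::comm_ring_1 fps \<Rightarrow> 'a fps" where
  "fps_theta F \<equiv> fps_X * fps_deriv F"

lemma fps_theta_nth: "fps_theta F $ n = of_nat n * F $ n"
  by (cases n) (simp_all add: fps_X_mult_nth del: of_nat_Suc)

lemma pochhammer_neq_0_if_shifts_neq_0:
  fixes x :: "'a::field_char_0"
  assumes "\<forall>m::nat. x + of_nat m \<noteq> 0"
  shows "pochhammer x n \<noteq> 0"
  using assms by (auto simp: pochhammer_eq_0_iff add_eq_0_iff2)

definition fps_pow_1m4X :: "complex \<Rightarrow> complex fps" where
  "fps_pow_1m4X s = fps_binomial s oo (fps_const (-4) * fps_X)"

lemma fps_pow_1m4X_nth: "fps_pow_1m4X s $ n = (-4)^n * (s gchoose n)"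
  by (simp add: fps_pow_1m4X_def fps_compose_linear)

lemma fps_pow_1m4X_add: "fps_pow_1m4X (s + t) = fps_pow_1m4X s * fps_pow_1m4X t"
  by (simp add: fps_pow_1m4X_def fps_binomial_add_mult fps_compose_mult_distrib)

lemma fps_pow_1m4X_0 [simp]: "fps_pow_1m4X 0 = 1"
  by (simp add: fps_pow_1m4X_def)

lemma fps_pow_1m4X_1: "fps_pow_1m4X 1 = 1 - 4 * fps_X"
  by (simp add: fps_pow_1m4X_def fps_binomial_1 fps_compose_add_distrib numeral_fps_const)

lemma fps_pow_1m4X_unfold: "fps_pow_1m4X s = (1 - 4 * fps_X) * fps_pow_1m4X (s - 1)"
  using fps_pow_1m4X_add[of 1 "s - 1"] by (simp add: fps_pow_1m4X_1)

lemma fps_pow_1m4X_power: "fps_pow_1m4X s ^ n = fps_pow_1m4X (of_nat n * s)"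
  by (induction n) (simp_all add: fps_pow_1m4X_add[symmetric] algebra_simps)

lemma fps_deriv_fps_pow_1m4X:
  "fps_deriv (fps_pow_1m4X s) = - 4 * fps_const s * fps_pow_1m4X (s - 1)"
proof (rule fps_ext)
  fix n
  have "fps_deriv (fps_pow_1m4X s) $ n = (-4)^(Suc n) * (of_nat (Suc n) * (s gchoose Suc n))"
    by (simp add: fps_pow_1m4X_nth)
  also have "\<dots> = (-4)^(Suc n) * (s * ((s - 1) gchoose n))"
    by (subst gbinomial_absorption) simp
  finally show "fps_deriv (fps_pow_1m4X s) $ n = (- 4 * fps_const s * fps_pow_1m4X (s - 1)) $ n"
    by (simp add: fps_pow_1m4X_nth numeral_fps_const)
qed

lemma has_fps_expansion_pow_1m4X: "(\<lambda>x. (1 - 4 * x) powr s) has_fps_expansion fps_pow_1m4X s"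
proof -
  have "(\<lambda>x::complex. -4 * x) has_fps_expansion fps_const (-4) * fps_X"
    using has_fps_expansion_cmult_left[OF has_fps_expansion_fps_X, of "-4::complex"] by simp
  from has_fps_expansion_compose[OF has_fps_expansion_binomial_complex this]
  show ?thesis by (simp add: fps_pow_1m4X_def o_def)
qed

definition fps_Z :: "complex fps" where
  "fps_Z = - 27 * fps_X * fps_pow_1m4X (-3)"

lemma fps_Z_nth_0 [simp]: "fps_Z $ 0 = 0"
  by (simp add: fps_Z_def)

lemma fps_deriv_fps_Z: "fps_deriv fps_Z = - 27 * (1 + 8 * fps_X) * fps_pow_1m4X (-4)"
proof -
  have "fps_deriv fps_Z = - 27 * (fps_pow_1m4X (-3) + 12 * fps_X * fps_pow_1m4X (-4))"
    by (simp add: fps_Z_def fps_deriv_fps_pow_1m4X numeral_fps_const algebra_simps)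
  also have "fps_pow_1m4X (-3) = (1 - 4 * fps_X) * fps_pow_1m4X (-4)"
    using fps_pow_1m4X_unfold[of "-3"] by simp
  finally show ?thesis by algebra
qed

lemma fps_Z_ode: "(1 + 8 * fps_X) * fps_Z = fps_theta fps_Z * (1 - 4 * fps_X)"
proof -
  have Z: "fps_Z = - 27 * fps_X * (1 - 4 * fps_X) * fps_pow_1m4X (-4)"
    using fps_pow_1m4X_unfold[of "-3"] by (simp add: fps_Z_def mult.assoc)
  show ?thesis
    unfolding fps_deriv_fps_Z unfolding Z by algebra
qed

lemma fps_Z_power: "fps_Z ^ i = fps_const ((-27)^i) * fps_X ^ i * fps_pow_1m4X (- 3 * of_nat i)"
  by (simp add: fps_Z_def power_mult_distrib fps_pow_1m4X_power fps_const_power numeral_fps_const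
      algebra_simps)

lemma has_fps_expansion_fps_Z: "(\<lambda>x::complex. -27 * x / (1 - 4 * x)^3) has_fps_expansion fps_Z"
proof -
  have "(\<lambda>x::complex. -27 * x * (1 - 4 * x) powr (-3))
          has_fps_expansion fps_const (-27) * fps_X * fps_pow_1m4X (-3)"
    by (intro has_fps_expansion_mult has_fps_expansion_cmult_left has_fps_expansion_fps_X
        has_fps_expansion_pow_1m4X)
  moreover have "(1 - 4 * x) powr (-3) = inverse ((1 - 4 * x)^3)" for x :: complex
    using powr_nat'[of "1 - 4 * x" 3] by (simp add: powr_minus)
  ultimately show ?thesis
    by (simp add: fps_Z_def divide_inverse numeral_fps_const)
qed

lemma theta_fps_pow_1m4X_compose_fps_Z:
  assumes "B \<noteq> 0"
  shows "3 * fps_theta (fps_pow_1m4X (-B) * (F oo fps_Z)) + fps_const B * (fps_pow_1m4X (-B) * (F oo fps_Z))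
     = fps_const B * (1 + 8 * fps_X) * fps_pow_1m4X (-B-1)
         * ((F + fps_const (3/B) * fps_theta F) oo fps_Z)"
proof -
  define W where "W = fps_pow_1m4X (-B-1)"
  define P where "P = F oo fps_Z"
  define Q where "Q = fps_deriv F oo fps_Z"
  have V: "fps_pow_1m4X (-B) = (1 - 4 * fps_X) * W"
    using fps_pow_1m4X_unfold[of "-B"] by (simp add: W_def)
  have dV: "fps_deriv (fps_pow_1m4X (-B)) = 4 * fps_const B * W"
    by (simp add: fps_deriv_fps_pow_1m4X W_def flip: fps_const_neg)
  have BB: "fps_const B * fps_const (3/B) = 3"
    using assms by (simp add: numeral_fps_const flip: fps_const_mult)
  have compose: "(F + fps_const (3/B) * fps_theta F) oo fps_Z = P + fps_const (3/B) * fps_Z * Q"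
    by (simp add: P_def Q_def fps_compose_add_distrib fps_compose_mult_distrib)
  have deriv: "fps_deriv (fps_pow_1m4X (-B) * P)
      = fps_deriv (fps_pow_1m4X (-B)) * P + fps_pow_1m4X (-B) * Q * fps_deriv fps_Z"
    by (simp add: P_def Q_def fps_compose_deriv algebra_simps)
  show ?thesis
    unfolding compose P_def[symmetric] W_def[symmetric] deriv dV unfolding V
    using fps_Z_ode BB by algebra
qed

definition hyp3F2_fps :: "complex \<Rightarrow> complex \<Rightarrow> complex \<Rightarrow> complex \<Rightarrow> complex \<Rightarrow> complex fps" where
  "hyp3F2_fps a1 a2 a3 b1 b2 = Abs_fps (\<lambda>n. pochhammer a1 n * pochhammer a2 n * pochhammer a3 n
     / (pochhammer b1 n * pochhammer b2 n * fact n))"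

lemma eval_fps_hyp3F2_fps: "eval_fps (hyp3F2_fps a1 a2 a3 b1 b2) z = hyp3F2 a1 a2 a3 b1 b2 z"
  by (simp add: eval_fps_def hyp3F2_def hyp3F2_fps_def)

lemma tendsto_shift_ratio_1:
  "(\<lambda>n. (x + of_nat n) / (y + of_nat n)) \<longlonglongrightarrow> (1::'a::real_normed_field)"
proof -
  have "filterlim (\<lambda>n. y + of_nat n :: 'a) at_infinity sequentially"
    by (rule tendsto_add_filterlim_at_infinity[OF tendsto_const tendsto_of_nat])
  then have "(\<lambda>n. 1 + (x - y) / (y + of_nat n)) \<longlonglongrightarrow> (1 + 0 :: 'a)"
    by (intro tendsto_add tendsto_const tendsto_divide_0[OF tendsto_const])
  moreover have "eventually (\<lambda>n. y + of_nat n \<noteq> 0) sequentially"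
    using \<open>filterlim _ at_infinity _\<close>
    by (auto simp: filterlim_at_infinity_conv_norm_at_top filterlim_at_top
        dest!: spec[of _ 1] elim: eventually_mono)
  then have "eventually (\<lambda>n. 1 + (x - y) / (y + of_nat n) = (x + of_nat n) / (y + of_nat n)) sequentially"
    by (rule eventually_mono) (simp add: field_simps)
  ultimately show ?thesis
    by (simp add: tendsto_cong)
qed

lemma fps_conv_radius_hyp3F2_fps:
  fixes a1 a2 a3 b1 b2 :: complex
  assumes "\<forall>m::nat. a1 + of_nat m \<noteq> 0" "\<forall>m::nat. a2 + of_nat m \<noteq> 0" "\<forall>m::nat. a3 + of_nat m \<noteq> 0"
    and "\<forall>m::nat. b1 + of_nat m \<noteq> 0" "\<forall>m::nat. b2 + of_nat m \<noteq> 0"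
  shows "fps_conv_radius (hyp3F2_fps a1 a2 a3 b1 b2) = 1"
proof -
  define f where "f = fps_nth (hyp3F2_fps a1 a2 a3 b1 b2)"
  define R where "R n = (a1 + of_nat n) / (b1 + of_nat n) * ((a2 + of_nat n) / (b2 + of_nat n))
                       * ((a3 + of_nat n) / of_nat (Suc n))" for n
  have f_nz: "f n \<noteq> 0" for n
    using assms by (simp add: f_def hyp3F2_fps_def pochhammer_neq_0_if_shifts_neq_0)
  have "f (Suc n) = f n * R n" for n
    unfolding f_def R_def hyp3F2_fps_def fps_nth_Abs_fps pochhammer_rec' fact_Suc
    by (simp only: times_divide_times_eq ac_simps)
  then have "norm (f n) / norm (f (Suc n)) = inverse (norm (R n))" for n
    using f_nz[of n] by (simp add: norm_mult divide_inverse)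
  moreover have "(\<lambda>n. inverse (norm (R n))) \<longlonglongrightarrow> inverse (norm ((1::complex) * 1 * 1))"
    unfolding R_def of_nat_Suc
    by (intro tendsto_inverse tendsto_norm tendsto_mult tendsto_shift_ratio_1) simp
  ultimately have "conv_radius f = ereal 1"
    by (intro conv_radius_ratio_limit_nonzero[of _ 1]) simp_all
  then show ?thesis
    by (simp add: fps_conv_radius_def f_def)
qed

definition hyp3F2_thirds :: "complex \<Rightarrow> complex \<Rightarrow> complex \<Rightarrow> complex fps" where
  "hyp3F2_thirds c d A = hyp3F2_fps (A/3) ((A+1)/3) ((A+2)/3) c d"

lemma fps_conv_radius_hyp3F2_thirds:
  assumes A: "\<forall>m::nat. A + of_nat m \<noteq> 0"
    and "\<forall>m::nat. c + of_nat m \<noteq> 0" "\<forall>m::nat. d + of_nat m \<noteq> 0"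
  shows "fps_conv_radius (hyp3F2_thirds c d A) = 1"
proof -
  have "(A + of_nat i)/3 + of_nat m \<noteq> 0" for i m
    using A[rule_format, of "i + 3 * m"] by (simp add: field_simps)
  from this[of 0] this[of 1] this[of 2] show ?thesis
    unfolding hyp3F2_thirds_def using assms(2,3) by (intro fps_conv_radius_hyp3F2_fps) simp_all
qed

lemma hyp3F2_thirds_contiguous:
  assumes "A \<noteq> 0"
  shows "hyp3F2_thirds c d (A + 1)
           = hyp3F2_thirds c d A + fps_const (3/A) * fps_theta (hyp3F2_thirds c d A)"
proof (rule fps_ext)
  fix n
  have "A/3 * pochhammer (A/3 + 1) n = (A/3 + of_nat n) * pochhammer (A/3) n"
    by (metis pochhammer_rec pochhammer_rec')
  then have shift: "pochhammer ((A + 1 + 2)/3) n = pochhammer (A/3) n * (1 + 3 * of_nat n / A)"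
    using assms by (simp add: field_simps)
  have "(A + 1 + 1)/3 = (A + 2)/3"
    by simp
  then have "hyp3F2_thirds c d (A + 1) $ n = (1 + 3 * of_nat n / A) * hyp3F2_thirds c d A $ n"
    unfolding hyp3F2_thirds_def hyp3F2_fps_def fps_nth_Abs_fps shift
    by (simp only: times_divide_eq_right ac_simps)
  then show "hyp3F2_thirds c d (A + 1) $ n
      = (hyp3F2_thirds c d A + fps_const (3/A) * fps_theta (hyp3F2_thirds c d A)) $ n"
    by (simp add: fps_theta_nth divide_inverse algebra_simps)
qed

lemma pochhammer_thirds:
  "pochhammer (a/3) i * pochhammer ((a+1)/3) i * pochhammer ((a+2)/3) i * 27^i
     = pochhammer (a::complex) (3*i)"
proof (induction i)
  case (Suc i)
  have "pochhammer (a/3) (Suc i) * pochhammer ((a+1)/3) (Suc i) * pochhammer ((a+2)/3) (Suc i) * 27^(Suc i)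
      = (pochhammer (a/3) i * pochhammer ((a+1)/3) i * pochhammer ((a+2)/3) i * 27^i)
          * (27 * ((a/3 + of_nat i) * ((a+1)/3 + of_nat i) * ((a+2)/3 + of_nat i)))"
    by (simp only: pochhammer_rec' power_Suc ac_simps)
  also have "\<dots> = pochhammer a (3*i) * (27 * ((a/3 + of_nat i) * ((a+1)/3 + of_nat i) * ((a+2)/3 + of_nat i)))"
    by (simp only: Suc.IH)
  also have "27 * ((a/3 + of_nat i) * ((a+1)/3 + of_nat i) * ((a+2)/3 + of_nat i))
      = pochhammer (a + of_nat (3*i)) 3"
    by (simp add: numeral_3_eq_3 pochhammer_rec' field_simps)
  also have "pochhammer a (3*i) * pochhammer (a + of_nat (3*i)) 3 = pochhammer a (3 * i + 3)"
    by (rule pochhammer_product'[symmetric])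
  finally show ?case
    by (simp add: add.commute)
qed simp

lemma fps_compose_nth_eq_sum_le:
  fixes F G :: "'a::comm_ring_1 fps"
  assumes "G $ 0 = 0" "n \<le> N"
  shows "(F oo G) $ n = (\<Sum>i\<le>N. F $ i * (G ^ i) $ n)"
proof -
  have "(F oo G) $ n = (\<Sum>i\<le>n. F $ i * (G ^ i) $ n)"
    by (simp add: fps_compose_nth atLeast0AtMost)
  also have "\<dots> = (\<Sum>i\<le>N. F $ i * (G ^ i) $ n)"
    using assms by (intro sum.mono_neutral_left) (auto simp: startsby_zero_power_prefix)
  finally show ?thesis .
qed

lemma fps_mult_compose_nth:
  fixes F G H :: "'a::comm_ring_1 fps"
  assumes "G $ 0 = 0"
  shows "(H * (F oo G)) $ N = (\<Sum>i\<le>N. F $ i * (H * G ^ i) $ N)"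
proof -
  have "(H * (F oo G)) $ N = (\<Sum>j=0..N. \<Sum>i\<le>N. H $ j * (F $ i * (G ^ i) $ (N - j)))"
    unfolding fps_mult_nth
    by (intro sum.cong refl) (simp add: fps_compose_nth_eq_sum_le[OF assms, where N = N] sum_distrib_left)
  also have "\<dots> = (\<Sum>i\<le>N. F $ i * (H * G ^ i) $ N)"
    unfolding fps_mult_nth sum_distrib_left by (subst sum.swap) (simp add: mult_ac)
  finally show ?thesis .
qed

lemma fps_pow_1m4X_mult_power_fps_Z_nth:
  "(fps_pow_1m4X s * fps_Z ^ i) $ N
     = (if N < i then 0 else (-27)^i * fps_pow_1m4X (s - 3 * of_nat i) $ (N - i))"
proof -
  have "fps_pow_1m4X s * fps_Z ^ i = fps_const ((-27)^i) * (fps_X ^ i * fps_pow_1m4X (s - 3 * of_nat i))"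
    by (simp add: fps_Z_power fps_pow_1m4X_add[symmetric] algebra_simps)
  then show ?thesis
    by (simp add: fps_X_power_mult_nth)
qed

lemma of_nat_add_1_neq_0 [simp]:
  "(of_nat n + 1 :: 'a::semiring_char_0) \<noteq> 0" "(1 + of_nat n :: 'a::semiring_char_0) \<noteq> 0"
  by (metis add.commute of_nat_Suc of_nat_eq_0_iff nat.simps(3))+

definition bailey_term :: "complex \<Rightarrow> complex \<Rightarrow> complex \<Rightarrow> nat \<Rightarrow> nat \<Rightarrow> complex" where
  "bailey_term a c d N i = (if i \<le> N then (-1)^i * 4^(N-i) * pochhammer a (N + 2*i)
       / (pochhammer c i * pochhammer d i * fact i * fact (N-i)) else 0)"

text \<open>Zeilberger's certificate for the recurrence of \<open>\<Sum>\<^sub>i bailey_term a c d N i\<close> in \<open>N\<close>.\<close>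
definition bailey_cert :: "complex \<Rightarrow> complex \<Rightarrow> complex \<Rightarrow> nat \<Rightarrow> nat \<Rightarrow> complex" where
  "bailey_cert a c d N i = (if i = 0 \<or> Suc N < i then 0 else
      - (3 * of_nat N + 2 + a) * (-1)^i * 4^(Suc N - i) * pochhammer a (N + 2*i)
       / (pochhammer c (i-1) * pochhammer d (i-1) * fact (i-1) * fact (Suc N - i)))"

lemma bailey_telescoping_inner:
  fixes a b :: complex
  defines "c \<equiv> 3/4 + a/2 + b/2" and "d \<equiv> 3/4 + a/2 - b/2"
  assumes c: "\<forall>m::nat. c + of_nat m \<noteq> 0" and d: "\<forall>m::nat. d + of_nat m \<noteq> 0"
    and N: "N = Suc j + m"
  shows "(of_nat N + 1) * (c + of_nat N) * (d + of_nat N) * bailey_term a c d (Suc N) (Suc j)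
       - (a + of_nat N) * (1/2 - b + of_nat N) * (1/2 + b + of_nat N) * bailey_term a c d N (Suc j)
     = bailey_cert a c d N (Suc (Suc j)) - bailey_cert a c d N (Suc j)"
proof -
  define R where "R = N + 2 * Suc j"
  define D where "D = pochhammer c (Suc j) * pochhammer d (Suc j) * fact (Suc j) * fact (Suc m)"
  define s :: complex where "s = (-1)^Suc j"
  define P where "P = pochhammer a R"
  have nz: "pochhammer c (Suc j) \<noteq> 0" "pochhammer d (Suc j) \<noteq> 0"
    "pochhammer c j \<noteq> 0" "pochhammer d j \<noteq> 0"
    using c d by (simp_all add: pochhammer_neq_0_if_shifts_neq_0)
  then have "D \<noteq> 0"
    by (simp add: D_def)
  have idx: "Suc N - Suc j = Suc m" "N - Suc j = m" "Suc N + 2 * Suc j = Suc R" "N + 2 * Suc j = R"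
    "N + 2 * Suc (Suc j) = Suc (Suc R)" "Suc N - Suc (Suc j) = m"
    using N by (simp_all add: R_def)
  have T1: "D * bailey_term a c d (Suc N) (Suc j) = s * (4 * 4^m) * ((a + of_nat R) * P)"
    using N \<open>D \<noteq> 0\<close> unfolding bailey_term_def idx D_def[symmetric]
    by (simp add: s_def P_def pochhammer_rec')
  have T0: "D * bailey_term a c d N (Suc j) = (of_nat m + 1) * (s * 4^m * P)"
    using N nz unfolding bailey_term_def idx D_def fact_Suc[of m]
    by (simp add: s_def P_def field_simps del: fact_Suc)
  have W2: "D * bailey_cert a c d N (Suc (Suc j))
      = (of_nat m + 1) * ((3 * of_nat N + 2 + a) * s * 4^m * ((a + of_nat R + 1) * ((a + of_nat R) * P)))"
    using N nz unfolding bailey_cert_def idx D_def fact_Suc[of m]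
      pochhammer_rec'[of a "Suc R"] pochhammer_rec'[of a R]
    by (simp add: s_def P_def field_simps del: fact_Suc)
  have W1: "D * bailey_cert a c d N (Suc j)
      = - ((c + of_nat j) * (d + of_nat j) * (of_nat j + 1)) * ((3 * of_nat N + 2 + a) * s * (4 * 4^m) * P)"
    using N nz unfolding bailey_cert_def idx D_def pochhammer_rec'[of c j] pochhammer_rec'[of d j]
      fact_Suc[of j]
    by (simp add: s_def P_def field_simps del: fact_Suc)
  let ?X = "(of_nat N + 1) * (c + of_nat N) * (d + of_nat N)"
  let ?Y = "(a + of_nat N) * (1/2 - b + of_nat N) * (1/2 + b + of_nat N)"
  have key: "4 * ?X * (a + of_nat R) - (of_nat m + 1) * ?Y
    = (of_nat m + 1) * (3 * of_nat N + 2 + a) * (a + of_nat R) * (a + of_nat R + 1)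
      + 4 * (3 * of_nat N + 2 + a) * (c + of_nat j) * (d + of_nat j) * (of_nat j + 1)"
    unfolding c_def d_def R_def N by (simp add: field_simps)
  have "D * (?X * bailey_term a c d (Suc N) (Suc j) - ?Y * bailey_term a c d N (Suc j))
      = ?X * (D * bailey_term a c d (Suc N) (Suc j)) - ?Y * (D * bailey_term a c d N (Suc j))"
    by algebra
  also have "\<dots> = s * 4^m * P * (4 * ?X * (a + of_nat R) - (of_nat m + 1) * ?Y)"
    unfolding T1 T0 by algebra
  also have "\<dots> = D * bailey_cert a c d N (Suc (Suc j)) - D * bailey_cert a c d N (Suc j)"
    unfolding key W1 W2 by algebra
  also have "\<dots> = D * (bailey_cert a c d N (Suc (Suc j)) - bailey_cert a c d N (Suc j))"
    by (simp add: right_diff_distrib)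
  finally show ?thesis
    using \<open>D \<noteq> 0\<close> by simp
qed

lemma bailey_telescoping_zero:
  fixes a b :: complex
  defines "c \<equiv> 3/4 + a/2 + b/2" and "d \<equiv> 3/4 + a/2 - b/2"
  shows "(of_nat N + 1) * (c + of_nat N) * (d + of_nat N) * bailey_term a c d (Suc N) 0
       - (a + of_nat N) * (1/2 - b + of_nat N) * (1/2 + b + of_nat N) * bailey_term a c d N 0
     = bailey_cert a c d N 1 - bailey_cert a c d N 0"
proof -
  define D :: complex where "D = fact (Suc N)"
  define P where "P = 4^N * pochhammer a N"
  let ?X = "(of_nat N + 1) * (c + of_nat N) * (d + of_nat N)"
  let ?Y = "(a + of_nat N) * (1/2 - b + of_nat N) * (1/2 + b + of_nat N)"
  have "D \<noteq> 0"
    by (simp add: D_def)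
  have W1: "D * bailey_cert a c d N 1
      = (of_nat N + 1) * ((3 * of_nat N + 2 + a) * (a + of_nat N + 1) * (a + of_nat N) * P)"
    by (simp add: bailey_cert_def D_def P_def pochhammer_rec' field_simps)
  have T1: "D * bailey_term a c d (Suc N) 0 = 4 * (a + of_nat N) * P"
    by (simp add: bailey_term_def D_def P_def pochhammer_rec')
  have T0: "D * bailey_term a c d N 0 = (of_nat N + 1) * P"
    by (simp add: bailey_term_def D_def P_def)
  have key: "4 * (c + of_nat N) * (d + of_nat N) - (1/2 - b + of_nat N) * (1/2 + b + of_nat N)
      = (3 * of_nat N + 2 + a) * (a + of_nat N + 1)"
    unfolding c_def d_def by (simp add: field_simps)
  have "D * (?X * bailey_term a c d (Suc N) 0 - ?Y * bailey_term a c d N 0)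
      = ?X * (D * bailey_term a c d (Suc N) 0) - ?Y * (D * bailey_term a c d N 0)"
    by algebra
  also have "\<dots> = (of_nat N + 1) * (a + of_nat N) * P
      * (4 * (c + of_nat N) * (d + of_nat N) - (1/2 - b + of_nat N) * (1/2 + b + of_nat N))"
    unfolding T1 T0 by algebra
  also have "\<dots> = D * (bailey_cert a c d N 1 - bailey_cert a c d N 0)"
    unfolding key right_diff_distrib W1 by (simp add: bailey_cert_def algebra_simps)
  finally show ?thesis
    using \<open>D \<noteq> 0\<close> by simp
qed

lemma bailey_telescoping_top:
  fixes a b :: complex
  defines "c \<equiv> 3/4 + a/2 + b/2" and "d \<equiv> 3/4 + a/2 - b/2"
  assumes c: "\<forall>m::nat. c + of_nat m \<noteq> 0" and d: "\<forall>m::nat. d + of_nat m \<noteq> 0"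
  shows "(of_nat N + 1) * (c + of_nat N) * (d + of_nat N) * bailey_term a c d (Suc N) (Suc N)
       - (a + of_nat N) * (1/2 - b + of_nat N) * (1/2 + b + of_nat N) * bailey_term a c d N (Suc N)
     = bailey_cert a c d N (Suc (Suc N)) - bailey_cert a c d N (Suc N)"
proof -
  define D where "D = pochhammer c (Suc N) * pochhammer d (Suc N) * fact (Suc N)"
  define s :: complex where "s = (-1)^Suc N"
  define P where "P = pochhammer a (3 * N + 2)"
  have nz: "pochhammer c N \<noteq> 0" "pochhammer d N \<noteq> 0" "c + of_nat N \<noteq> 0" "d + of_nat N \<noteq> 0"
    using c d by (simp_all add: pochhammer_neq_0_if_shifts_neq_0)
  then have "D \<noteq> 0"
    by (simp add: D_def pochhammer_rec')
  have idx: "Suc N + 2 * Suc N = Suc (3 * N + 2)" "N + 2 * Suc N = 3 * N + 2"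
    by simp_all
  have of_nat_idx: "of_nat (3 * N + 2) = 3 * of_nat N + (2 :: complex)"
    by simp
  have T: "D * bailey_term a c d (Suc N) (Suc N) = s * ((a + of_nat (3 * N + 2)) * P)"
    using \<open>D \<noteq> 0\<close> unfolding bailey_term_def idx pochhammer_rec'[of a "3 * N + 2"] D_def[symmetric]
    by (simp add: s_def P_def)
  have W: "D * bailey_cert a c d N (Suc N)
      = - ((c + of_nat N) * (d + of_nat N) * (of_nat N + 1)) * ((3 * of_nat N + 2 + a) * s * P)"
    using nz unfolding bailey_cert_def idx D_def pochhammer_rec'[of c N] pochhammer_rec'[of d N] fact_Suc[of N]
    by (simp add: s_def P_def field_simps del: fact_Suc)
  have T0: "bailey_term a c d N (Suc N) = 0" and W2: "bailey_cert a c d N (Suc (Suc N)) = 0"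
    by (simp_all add: bailey_term_def bailey_cert_def)
  have "D * ((of_nat N + 1) * (c + of_nat N) * (d + of_nat N) * bailey_term a c d (Suc N) (Suc N)
       - (a + of_nat N) * (1/2 - b + of_nat N) * (1/2 + b + of_nat N) * bailey_term a c d N (Suc N))
      = (of_nat N + 1) * (c + of_nat N) * (d + of_nat N) * (D * bailey_term a c d (Suc N) (Suc N))"
    unfolding T0 by algebra
  also have "\<dots> = - (D * bailey_cert a c d N (Suc N))"
    unfolding T W of_nat_idx by algebra
  also have "\<dots> = D * (bailey_cert a c d N (Suc (Suc N)) - bailey_cert a c d N (Suc N))"
    unfolding W2 by simp
  finally show ?thesis
    using \<open>D \<noteq> 0\<close> by simp
qed

lemma bailey_telescoping:
  fixes a b :: complex
  defines "c \<equiv> 3/4 + a/2 + b/2" and "d \<equiv> 3/4 + a/2 - b/2"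
  assumes c: "\<forall>m::nat. c + of_nat m \<noteq> 0" and d: "\<forall>m::nat. d + of_nat m \<noteq> 0"
  shows "(of_nat N + 1) * (c + of_nat N) * (d + of_nat N) * bailey_term a c d (Suc N) i
       - (a + of_nat N) * (1/2 - b + of_nat N) * (1/2 + b + of_nat N) * bailey_term a c d N i
     = bailey_cert a c d N (Suc i) - bailey_cert a c d N i"
proof -
  consider "i = 0" | j m where "i = Suc j" "N = Suc j + m" | "i = Suc N" | "Suc N < i"
    by (metis le_Suc_ex not0_implies_Suc not_less_eq le_neq_implies_less not_less)
  then show ?thesis
  proof cases
    case 1
    then show ?thesis using bailey_telescoping_zero[of N a b] by (simp add: c_def d_def)
  next
    case 2
    then show ?thesis using bailey_telescoping_inner[of a b N] c d by (simp add: c_def d_def)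
  next
    case 3
    then show ?thesis using bailey_telescoping_top[of a b N] c d by (simp add: c_def d_def)
  next
    case 4
    then show ?thesis by (simp add: bailey_term_def bailey_cert_def)
  qed
qed

lemma bailey_sum_recurrence:
  fixes a b :: complex
  defines "c \<equiv> 3/4 + a/2 + b/2" and "d \<equiv> 3/4 + a/2 - b/2"
  assumes c: "\<forall>m::nat. c + of_nat m \<noteq> 0" and d: "\<forall>m::nat. d + of_nat m \<noteq> 0"
  shows "(of_nat N + 1) * (c + of_nat N) * (d + of_nat N) * (\<Sum>i\<le>Suc N. bailey_term a c d (Suc N) i)
       = (a + of_nat N) * (1/2 - b + of_nat N) * (1/2 + b + of_nat N) * (\<Sum>i\<le>N. bailey_term a c d N i)"
proof -
  let ?X = "(of_nat N + 1) * (c + of_nat N) * (d + of_nat N)"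
  let ?Y = "(a + of_nat N) * (1/2 - b + of_nat N) * (1/2 + b + of_nat N)"
  have "(\<Sum>i\<le>Suc N. ?X * bailey_term a c d (Suc N) i - ?Y * bailey_term a c d N i)
      = (\<Sum>i<Suc (Suc N). bailey_cert a c d N (Suc i) - bailey_cert a c d N i)"
    using bailey_telescoping[of a b N] c d by (simp add: lessThan_Suc_atMost c_def d_def)
  also have "\<dots> = 0"
    by (simp only: sum_lessThan_telescope) (simp add: bailey_cert_def)
  moreover have "bailey_term a c d N (Suc N) = 0"
    by (simp add: bailey_term_def)
  ultimately show ?thesis
    by (simp add: sum_subtractf flip: sum_distrib_left)
qed

lemma bailey_sum:
  fixes a b :: complex
  defines "c \<equiv> 3/4 + a/2 + b/2" and "d \<equiv> 3/4 + a/2 - b/2"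
  assumes c: "\<forall>m::nat. c + of_nat m \<noteq> 0" and d: "\<forall>m::nat. d + of_nat m \<noteq> 0"
  shows "(\<Sum>i\<le>N. bailey_term a c d N i)
       = pochhammer a N * pochhammer (1/2 - b) N * pochhammer (1/2 + b) N
           / (fact N * pochhammer c N * pochhammer d N)"
proof (induction N)
  case 0
  then show ?case
    by (simp add: bailey_term_def)
next
  case (Suc N)
  let ?X = "(of_nat N + 1) * (c + of_nat N) * (d + of_nat N)"
  let ?Y = "(a + of_nat N) * (1/2 - b + of_nat N) * (1/2 + b + of_nat N)"
  let ?R = "\<lambda>N. pochhammer a N * pochhammer (1/2 - b) N * pochhammer (1/2 + b) N
              / (fact N * pochhammer c N * pochhammer d N)"
  have "?X \<noteq> 0"
    using c d by simp
  have "?R (Suc N) = ?R N * (?Y / ?X)"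
    by (simp only: pochhammer_rec' fact_Suc of_nat_Suc times_divide_times_eq ac_simps)
  also have "\<dots> = ?Y * (\<Sum>i\<le>N. bailey_term a c d N i) / ?X"
    by (simp add: Suc.IH)
  also have "\<dots> = ?X * (\<Sum>i\<le>Suc N. bailey_term a c d (Suc N) i) / ?X"
    unfolding bailey_sum_recurrence[of a b N, folded c_def d_def, OF c d] ..
  also have "\<dots> = (\<Sum>i\<le>Suc N. bailey_term a c d (Suc N) i)"
    using \<open>?X \<noteq> 0\<close> by simp
  finally show ?case ..
qed

lemma fps_pow_1m4X_neg_nth: "fps_pow_1m4X (- s) $ n = 4^n * pochhammer s n / fact n"
proof -
  have "(-4)^n * (-1)^n = (4::complex)^n"
    by (simp flip: power_mult_distrib)
  then show ?thesis
    by (simp add: fps_pow_1m4X_nth gbinomial_pochhammer)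
qed

lemma hyp3F2_thirds_compose_fps_Z_nth:
  assumes c: "\<forall>m::nat. c + of_nat m \<noteq> 0" and d: "\<forall>m::nat. d + of_nat m \<noteq> 0"
  shows "(fps_pow_1m4X (-a) * (hyp3F2_thirds c d a oo fps_Z)) $ N = (\<Sum>i\<le>N. bailey_term a c d N i)"
  unfolding fps_mult_compose_nth[OF fps_Z_nth_0]
proof (intro sum.cong refl)
  fix i assume "i \<in> {..N}"
  then have "i \<le> N"
    by simp
  have nz: "pochhammer c i \<noteq> 0" "pochhammer d i \<noteq> 0"
    using c d by (simp_all add: pochhammer_neq_0_if_shifts_neq_0)
  have "3 * i + (N - i) = N + 2 * i"
    using \<open>i \<le> N\<close> by simp
  then have prod: "pochhammer a (3 * i) * pochhammer (a + 3 * of_nat i) (N - i) = pochhammer a (N + 2 * i)"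
    using pochhammer_product'[of a "3 * i" "N - i"] by (simp only: of_nat_mult of_nat_numeral)
  have "(fps_pow_1m4X (-a) * fps_Z ^ i) $ N
      = (-1)^i * 27^i * (4^(N - i) * pochhammer (a + 3 * of_nat i) (N - i) / fact (N - i))"
    using \<open>i \<le> N\<close> fps_pow_1m4X_neg_nth[of "a + 3 * of_nat i"]
    by (simp add: fps_pow_1m4X_mult_power_fps_Z_nth power_mult_distrib[symmetric])
  then have "hyp3F2_thirds c d a $ i * (fps_pow_1m4X (-a) * fps_Z ^ i) $ N
      = (-1)^i * 4^(N - i) * ((pochhammer (a/3) i * pochhammer ((a+1)/3) i * pochhammer ((a+2)/3) i * 27^i)
          * pochhammer (a + 3 * of_nat i) (N - i)) / (pochhammer c i * pochhammer d i * fact i * fact (N - i))"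
    unfolding hyp3F2_thirds_def hyp3F2_fps_def fps_nth_Abs_fps using nz by (simp add: field_simps)
  also have "\<dots> = bailey_term a c d N i"
    unfolding pochhammer_thirds prod using \<open>i \<le> N\<close> by (simp add: bailey_term_def)
  finally show "hyp3F2_thirds c d a $ i * (fps_pow_1m4X (-a) * fps_Z ^ i) $ N = bailey_term a c d N i" .
qed

lemma hyp3F2_thirds_transformation:
  fixes a b :: complex
  defines "c \<equiv> 3/4 + a/2 + b/2" and "d \<equiv> 3/4 + a/2 - b/2"
  assumes c: "\<forall>m::nat. c + of_nat m \<noteq> 0" and d: "\<forall>m::nat. d + of_nat m \<noteq> 0"
  shows "Abs_fps (\<lambda>n. pochhammer a n * pochhammer (1/2 - b) n * pochhammer (1/2 + b) n
           / (fact n * pochhammer c n * pochhammer d n))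
       = fps_pow_1m4X (-a) * (hyp3F2_thirds c d a oo fps_Z)"
  using c d unfolding fps_eq_iff c_def d_def
  by (simp add: hyp3F2_thirds_compose_fps_Z_nth bailey_sum)

definition Q3_weight :: "nat \<Rightarrow> complex \<Rightarrow> complex \<Rightarrow> nat \<Rightarrow> complex" where
  "Q3_weight k a b n = pochhammer a n * pochhammer (1/2 - of_nat k - b) n * pochhammer (1/2 - of_nat k + b) n
     / (fact n * pochhammer (3/4 + of_nat k/2 + a/2 + b/2) n * pochhammer (3/4 + of_nat k/2 + a/2 - b/2) n)"

definition Q3_series :: "nat \<Rightarrow> complex \<Rightarrow> complex \<Rightarrow> complex fps" where
  "Q3_series k a b = Abs_fps (\<lambda>n. Q3_weight k a b n * Q3 k (of_nat n) a b)"

lemma lower_params_Suc: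
  "3/4 + of_nat k/2 + (a + 1)/2 + b/2 = 3/4 + of_nat (Suc k)/2 + a/2 + (b::complex)/2"
  "3/4 + of_nat k/2 + (a + 1)/2 - b/2 = 3/4 + of_nat (Suc k)/2 + a/2 - (b::complex)/2"
  by (simp_all add: field_simps)

lemma Q3_weight_Suc_left:
  fixes a b :: complex and k :: nat
  defines "p \<equiv> 1/2 - of_nat (Suc k) - b" and "q \<equiv> 1/2 - of_nat (Suc k) + b"
  shows "Q3_weight (Suc k) a b n * ((of_nat n + a) * (of_nat n + p) * (of_nat n + q))
       = a * p * q * Q3_weight k (a + 1) b n"
proof -
  have shift: "pochhammer x n * (of_nat n + x) = x * pochhammer (x + 1) n" for x :: complex
    using pochhammer_rec[of x n] pochhammer_rec'[of x n] by (simp add: ac_simps)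
  have "p + 1 = 1/2 - of_nat k - b" "q + 1 = 1/2 - of_nat k + b"
    by (simp_all add: p_def q_def field_simps)
  then have "pochhammer a n * pochhammer p n * pochhammer q n * ((of_nat n + a) * (of_nat n + p) * (of_nat n + q))
      = a * p * q * (pochhammer (a + 1) n * pochhammer (1/2 - of_nat k - b) n * pochhammer (1/2 - of_nat k + b) n)"
    using shift[of a] shift[of p] shift[of q] by algebra
  then show ?thesis
    unfolding Q3_weight_def lower_params_Suc p_def[symmetric] q_def[symmetric]
    by (simp only: times_divide_eq_left times_divide_eq_right)
qed

lemma Q3_weight_Suc_both:
  fixes a b :: complex
  assumes c: "3/4 + of_nat (Suc k)/2 + a/2 + b/2 + of_nat m \<noteq> 0"
    and d: "3/4 + of_nat (Suc k)/2 + a/2 - b/2 + of_nat m \<noteq> 0"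
  shows "Q3_weight (Suc k) a b (Suc m) * (of_nat (Suc m) * (3/4 + of_nat (Suc k)/2 + a/2 + b/2 + of_nat m)
            * (3/4 + of_nat (Suc k)/2 + a/2 - b/2 + of_nat m))
       = a * (1/2 - of_nat (Suc k) - b) * (1/2 - of_nat (Suc k) + b) * Q3_weight k (a + 1) b m"
proof -
  have cancel: "(x1 * n1 * (x2 * n2) * (x3 * n3)) / (y1 * z1 * (y2 * z2) * (y3 * z3)) * (y1 * y2 * y3)
      = x1 * x2 * x3 * (n1 * n2 * n3 / (z1 * z2 * z3))"
    if "y1 \<noteq> 0" "y2 \<noteq> 0" "y3 \<noteq> 0" for x1 x2 x3 n1 n2 n3 y1 y2 y3 z1 z2 z3 :: complex
    using that by (cases "z1 * z2 * z3 = 0") (auto simp: field_simps)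
  have shift: "1/2 - of_nat (Suc k) - b + 1 = 1/2 - of_nat k - b"
    "1/2 - of_nat (Suc k) + b + 1 = 1/2 - of_nat k + b"
    by (simp_all add: field_simps)
  show ?thesis
    unfolding Q3_weight_def lower_params_Suc pochhammer_rec[of a] pochhammer_rec[of "1/2 - of_nat (Suc k) - b"]
      pochhammer_rec[of "1/2 - of_nat (Suc k) + b"] shift
      pochhammer_rec'[of "3/4 + of_nat (Suc k)/2 + a/2 + b/2"]
      pochhammer_rec'[of "3/4 + of_nat (Suc k)/2 + a/2 - b/2"] fact_Suc of_nat_mult
    by (rule cancel[OF _ c d]) (simp del: of_nat_Suc)
qed

lemma Q3_Suc_at_0:
  assumes "a \<noteq> 0" "1/2 - of_nat (Suc k) - b \<noteq> 0" "1/2 - of_nat (Suc k) + b \<noteq> 0"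
    "2 * of_nat (Suc k) + a \<noteq> 0"
  shows "Q3 (Suc k) 0 a b = Q3 k 0 (a + 1) b"
proof -
  have "(y / y * x * p * q * Q) / (x * p * q) = Q" if "y \<noteq> 0" "x * p * q \<noteq> 0" for y x p q Q :: complex
    using that by (simp add: field_simps)
  then show ?thesis
    unfolding Q3.simps(2) using assms
    by (simp only: mult_zero_right mult_zero_left add_0 add_0_right) simp
qed

lemma Q3_weighted_recurrence:
  fixes a b :: complex and k :: nat
  defines "K \<equiv> of_nat (Suc k) :: complex"
  assumes a: "a \<noteq> 0" and p: "1/2 - K - b \<noteq> 0" and q: "1/2 - K + b \<noteq> 0" and B: "2 * K + a \<noteq> 0"
    and c: "3/4 + K/2 + a/2 + b/2 + of_nat m \<noteq> 0" and d: "3/4 + K/2 + a/2 - b/2 + of_nat m \<noteq> 0"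
  shows "(2 * K + a) * (Q3_weight (Suc k) a b (Suc m) * Q3 (Suc k) (of_nat (Suc m)) a b)
    = (3 * of_nat (Suc m) + (2 * K + a)) * (Q3_weight k (a + 1) b (Suc m) * Q3 k (of_nat (Suc m)) (a + 1) b)
      + 8 * (3 * of_nat m + (2 * K + a - 3 * (2 * of_nat k + 1)))
          * (Q3_weight k (a + 1) b m * Q3 k (of_nat m) (a + 1) b)"
proof -
  define x :: complex where "x = of_nat (Suc m)"
  define p where "p = 1/2 - K - b"
  define q where "q = 1/2 - K + b"
  define B where "B = 2 * K + a"
  define E where "E = B - 3 * (2 * of_nat k + 1)"
  define cc where "cc = 3/4 + K/2 + a/2 + b/2 + of_nat m"
  define dd where "dd = 3/4 + K/2 + a/2 - b/2 + of_nat m"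
  define w where "w = Q3_weight (Suc k) a b (Suc m)"
  have nz: "a * p * q \<noteq> 0" "B \<noteq> 0"
    using a p q B by (simp_all add: p_def q_def B_def)
  have e: "3 * x + 2 * K + a = 3 * x + B" "x + 1/2 - K - b = x + p" "x + 1/2 - K + b = x + q"
    "x - 1/4 + K/2 + a/2 + b/2 = cc" "x - 1/4 + K/2 + a/2 - b/2 = dd" "x - 1 = of_nat m"
    "3 * x - 4 * K + a = 3 * of_nat m + E" "2 * K + a = B"
    by (simp_all add: x_def B_def p_def q_def cc_def dd_def E_def K_def algebra_simps)
  have Q: "Q3 (Suc k) x a b = ((3 * x + B) / B * (x + a) * (x + p) * (x + q) * Q3 k x (a + 1) b
      + 8 * (3 * of_nat m + E) / B * x * cc * dd * Q3 k (of_nat m) (a + 1) b) / (a * p * q)"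
    unfolding Q3.simps(2) K_def[symmetric] e p_def q_def ..
  have wA: "w * ((x + a) * (x + p) * (x + q)) = a * p * q * Q3_weight k (a + 1) b (Suc m)"
    using Q3_weight_Suc_left[of k a b "Suc m"] by (simp only: w_def x_def p_def q_def K_def)
  have wB: "w * (x * cc * dd) = a * p * q * Q3_weight k (a + 1) b m"
    using Q3_weight_Suc_both[of k a b m] c d by (simp only: w_def x_def p_def q_def K_def cc_def dd_def) blast
  have step: "B * (w * (((3 * x + B) / B * (x + a) * (x + p) * (x + q) * Qx + 8 * E' / B * x * cc * dd * Qm)
          / (a * p * q)))
      = (3 * x + B) * (g * Qx) + 8 * E' * (gm * Qm)"
    if wg: "w * ((x + a) * (x + p) * (x + q)) = a * p * q * g" and wgm: "w * (x * cc * dd) = a * p * q * gm"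
    for Qx Qm E' g gm
  proof -
    have "B * (w * (((3 * x + B) / B * (x + a) * (x + p) * (x + q) * Qx + 8 * E' / B * x * cc * dd * Qm)
          / (a * p * q)))
        = ((3 * x + B) * (w * ((x + a) * (x + p) * (x + q))) * Qx + 8 * E' * (w * (x * cc * dd)) * Qm)
          / (a * p * q)"
      using nz by (simp add: field_simps)
    also have "\<dots> = (3 * x + B) * (g * Qx) + 8 * E' * (gm * Qm)"
      unfolding wg wgm using nz by (simp add: field_simps)
    finally show ?thesis .
  qed
  from step[OF wA wB] show ?thesis
    unfolding Q w_def[symmetric] x_def[symmetric] B_def[symmetric] E_def[symmetric] .
qed

lemma Q3_series_Suc:
  fixes a b :: complex and k :: nat
  defines "B \<equiv> 2 * of_nat (Suc k) + a" and "G \<equiv> Q3_series k (a + 1) b"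
  assumes a: "a \<noteq> 0" and p: "1/2 - of_nat (Suc k) - b \<noteq> 0" and q: "1/2 - of_nat (Suc k) + b \<noteq> 0"
    and B: "B \<noteq> 0"
    and c: "\<forall>m::nat. 3/4 + of_nat (Suc k)/2 + a/2 + b/2 + of_nat m \<noteq> 0"
    and d: "\<forall>m::nat. 3/4 + of_nat (Suc k)/2 + a/2 - b/2 + of_nat m \<noteq> 0"
  shows "fps_const B * Q3_series (Suc k) a b
    = 3 * fps_theta G + fps_const B * G
      + 8 * fps_X * (3 * fps_theta G + fps_const (B - 3 * (2 * of_nat k + 1)) * G)"
proof (rule fps_ext)
  fix n
  show "(fps_const B * Q3_series (Suc k) a b) $ n
    = (3 * fps_theta G + fps_const B * G
      + 8 * fps_X * (3 * fps_theta G + fps_const (B - 3 * (2 * of_nat k + 1)) * G)) $ n"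
  proof (cases n)
    case 0
    then show ?thesis
      using Q3_Suc_at_0[OF a p q B[unfolded B_def]]
      by (simp add: Q3_series_def Q3_weight_def G_def fps_theta_nth fps_X_mult_nth del: Q3.simps)
  next
    case (Suc m)
    have theta: "(3 * fps_theta G) $ i = 3 * (of_nat i * G $ i)" for i
      by (simp add: numeral_fps_const fps_theta_nth)
    have X8: "(8 * fps_X * (3 * fps_theta G + fps_const (B - 3 * (2 * of_nat k + 1)) * G)) $ Suc m
        = 8 * (3 * (of_nat m * G $ m) + (B - 3 * (2 * of_nat k + 1)) * G $ m)"
      by (simp add: numeral_fps_const mult.assoc theta)
    have G: "G $ i = Q3_weight k (a + 1) b i * Q3 k (of_nat i) (a + 1) b" for i
      by (simp add: G_def Q3_series_def)
    have lhs: "(fps_const B * Q3_series (Suc k) a b) $ Suc m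
        = B * (Q3_weight (Suc k) a b (Suc m) * Q3 (Suc k) (of_nat (Suc m)) a b)"
      by (simp add: Q3_series_def del: Q3.simps of_nat_Suc)
    show ?thesis
      using Q3_weighted_recurrence[OF a p q B[unfolded B_def] c[rule_format, of m] d[rule_format, of m],
          folded B_def]
      unfolding Suc lhs unfolding fps_add_nth theta fps_mult_left_const_nth X8 G by algebra
  qed
qed

lemma theta_operator_conj_power:
  fixes Y :: "complex fps" and c :: complex
  shows "3 * fps_theta ((1 + 8 * fps_X)^j * Y) + fps_const c * ((1 + 8 * fps_X)^j * Y)
      + 8 * fps_X * (3 * fps_theta ((1 + 8 * fps_X)^j * Y) + fps_const (c - 3 * of_nat j) * ((1 + 8 * fps_X)^j * Y))
     = (1 + 8 * fps_X)^j * (1 + 8 * fps_X) * (3 * fps_theta Y + fps_const c * Y)"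
proof (cases j)
  case 0
  then show ?thesis
    by (simp add: algebra_simps)
next
  case (Suc i)
  define R where "R = (1 + 8 * fps_X :: complex fps)^i"
  define s where "s = (of_nat (Suc i) :: complex fps)"
  have "fps_deriv (1 + 8 * fps_X :: complex fps) = 8"
    by simp
  then have dE: "fps_deriv ((1 + 8 * fps_X :: complex fps)^j) = 8 * s * R"
    unfolding Suc fps_deriv_power' diff_Suc_1 R_def s_def by (simp add: mult_ac)
  have E: "(1 + 8 * fps_X :: complex fps)^j = (1 + 8 * fps_X) * R"
    by (simp add: Suc R_def)
  have "fps_const (c - 3 * of_nat j) = fps_const c - fps_const 3 * fps_const (of_nat j)"
    by simp
  then have C: "fps_const (c - 3 * of_nat j) = fps_const c - 3 * s"
    by (simp only: Suc s_def numeral_fps_const[symmetric] fps_of_nat)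
  show ?thesis
    unfolding fps_deriv_mult dE C unfolding E by algebra
qed

lemma Q3_series_0_closed_form:
  fixes a b :: complex
  assumes a: "\<forall>m::nat. a + of_nat m \<noteq> 0"
    and c: "\<forall>m::nat. 3/4 + a/2 + b/2 + of_nat m \<noteq> 0" and d: "\<forall>m::nat. 3/4 + a/2 - b/2 + of_nat m \<noteq> 0"
  shows "Q3_series 0 a b = (1 + 8 * fps_X) * fps_pow_1m4X (- (1 + a))
      * (hyp3F2_thirds (3/4 + a/2 + b/2) (3/4 + a/2 - b/2) (1 + a) oo fps_Z)"
proof -
  define F where "F = hyp3F2_thirds (3/4 + a/2 + b/2) (3/4 + a/2 - b/2)"
  define H where "H = Abs_fps (\<lambda>n. Q3_weight 0 a b n)"
  have "a \<noteq> 0"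
    using a[rule_format, of 0] by simp
  have H: "H = fps_pow_1m4X (-a) * (F a oo fps_Z)"
    using hyp3F2_thirds_transformation[of a b] c d by (simp add: H_def F_def Q3_weight_def)
  have "Q3_series 0 a b = H + fps_const (3/a) * fps_theta H"
    by (rule fps_ext) (simp add: Q3_series_def H_def fps_theta_nth algebra_simps)
  then have "fps_const a * Q3_series 0 a b = 3 * fps_theta H + fps_const a * H"
    using \<open>a \<noteq> 0\<close> by (simp add: algebra_simps numeral_fps_const flip: fps_const_mult)
  also have "\<dots> = fps_const a * (1 + 8 * fps_X) * fps_pow_1m4X (-a-1)
      * ((F a + fps_const (3/a) * fps_theta (F a)) oo fps_Z)"
    unfolding H theta_fps_pow_1m4X_compose_fps_Z[OF \<open>a \<noteq> 0\<close>] ..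
  also have "F a + fps_const (3/a) * fps_theta (F a) = F (1 + a)"
    using hyp3F2_thirds_contiguous[OF \<open>a \<noteq> 0\<close>] by (simp add: F_def add.commute)
  also have "-a-1 = - (1 + a)"
    by simp
  finally have "fps_const a * Q3_series 0 a b
      = fps_const a * ((1 + 8 * fps_X) * fps_pow_1m4X (- (1 + a)) * (F (1 + a) oo fps_Z))"
    by (simp only: mult.assoc)
  then show ?thesis
    using \<open>a \<noteq> 0\<close> by (simp add: F_def)
qed

lemma Q3_series_closed_form:
  fixes a b :: complex and k :: nat
  assumes b: "\<forall>j::nat. b \<noteq> of_nat j + 1/2 \<and> b \<noteq> - (of_nat j + 1/2)"
    and a: "\<forall>m::nat. a + of_nat m \<noteq> 0"
    and c: "\<forall>m::nat. 3/4 + of_nat k/2 + a/2 + b/2 + of_nat m \<noteq> 0"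
    and d: "\<forall>m::nat. 3/4 + of_nat k/2 + a/2 - b/2 + of_nat m \<noteq> 0"
  shows "Q3_series k a b = (1 + 8 * fps_X)^(2 * k + 1) * fps_pow_1m4X (- (1 + 2 * of_nat k + a))
      * (hyp3F2_thirds (3/4 + of_nat k/2 + a/2 + b/2) (3/4 + of_nat k/2 + a/2 - b/2) (1 + 2 * of_nat k + a)
           oo fps_Z)"
  using a c d
proof (induction k arbitrary: a)
  case 0
  then show ?case
    using Q3_series_0_closed_form[of a b] by simp
next
  case (Suc k)
  define B where "B = 2 * of_nat (Suc k) + a"
  define F where "F = hyp3F2_thirds (3/4 + of_nat (Suc k)/2 + a/2 + b/2) (3/4 + of_nat (Suc k)/2 + a/2 - b/2)"
  define Y where "Y = fps_pow_1m4X (-B) * (F B oo fps_Z)"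
  have "a \<noteq> 0"
    using Suc.prems(1)[rule_format, of 0] by simp
  have "B \<noteq> 0"
    using Suc.prems(1)[rule_format, of "2 * Suc k"] by (simp add: B_def add_ac)
  have "1/2 - of_nat (Suc k) - b \<noteq> 0" "1/2 - of_nat (Suc k) + b \<noteq> 0"
    using b[rule_format, of k] by (auto simp: algebra_simps)
  have IH: "Q3_series k (a + 1) b = (1 + 8 * fps_X)^(2 * k + 1) * Y"
  proof -
    have "\<forall>m::nat. a + 1 + of_nat m \<noteq> 0"
      using Suc.prems(1) by (metis add.assoc of_nat_Suc add.commute)
    moreover have "1 + 2 * of_nat k + (a + 1) = B"
      by (simp add: B_def algebra_simps)
    ultimately show ?thesis
      using Suc.IH[of "a + 1"] Suc.prems(2,3) unfolding lower_params_Suc Y_def F_def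
      by (simp add: mult.assoc)
  qed
  have "B - 3 * (2 * of_nat k + 1) = B - 3 * of_nat (2 * k + 1)"
    by simp
  then have "fps_const B * Q3_series (Suc k) a b
      = (1 + 8 * fps_X)^(2 * k + 1) * (1 + 8 * fps_X) * (3 * fps_theta Y + fps_const B * Y)"
    unfolding Q3_series_Suc[OF \<open>a \<noteq> 0\<close> \<open>1/2 - of_nat (Suc k) - b \<noteq> 0\<close>
        \<open>1/2 - of_nat (Suc k) + b \<noteq> 0\<close> \<open>B \<noteq> 0\<close>[unfolded B_def] Suc.prems(2,3), folded B_def] IH
    by (simp only: theta_operator_conj_power)
  also have "3 * fps_theta Y + fps_const B * Y
      = fps_const B * (1 + 8 * fps_X) * fps_pow_1m4X (-B-1) * ((F B + fps_const (3/B) * fps_theta (F B)) oo fps_Z)"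
    unfolding Y_def theta_fps_pow_1m4X_compose_fps_Z[OF \<open>B \<noteq> 0\<close>] ..
  also have "F B + fps_const (3/B) * fps_theta (F B) = F (1 + 2 * of_nat (Suc k) + a)"
    using hyp3F2_thirds_contiguous[OF \<open>B \<noteq> 0\<close>] by (simp add: F_def B_def add_ac)
  also have "-B-1 = - (1 + 2 * of_nat (Suc k) + a)"
    by (simp add: B_def)
  finally have "fps_const B * Q3_series (Suc k) a b = fps_const B * ((1 + 8 * fps_X)^(2 * Suc k + 1)
      * fps_pow_1m4X (- (1 + 2 * of_nat (Suc k) + a)) * (F (1 + 2 * of_nat (Suc k) + a) oo fps_Z))"
    by (simp add: algebra_simps)
  then show ?case
    using \<open>B \<noteq> 0\<close> by (simp add: F_def)
qed

lemma fps_compose_identity_eval: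
  fixes F G :: "complex fps" and A :: complex and j :: nat
  assumes F: "fps_conv_radius F > 0"
    and G: "G = (1 + 8 * fps_X)^j * fps_pow_1m4X (-A) * (F oo fps_Z)"
  shows "\<exists>r>0. \<forall>x::complex. norm x < r \<longrightarrow> summable (\<lambda>n. G $ n * x ^ n) \<and>
     eval_fps F (-27 * x / (1 - 4 * x)^3)
       = inverse ((1 + 8 * x)^j) * (1 - 4 * x) powr A * suminf (\<lambda>n. G $ n * x ^ n)"
proof -
  have "(\<lambda>x::complex. 1 + 8 * x) has_fps_expansion 1 + fps_const 8 * fps_X"
    by (intro has_fps_expansion_add has_fps_expansion_cmult_left has_fps_expansion_fps_X
        has_fps_expansion_1)
  then have "(\<lambda>x::complex. (1 + 8 * x)^j) has_fps_expansion (1 + fps_const 8 * fps_X)^j"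
    by (rule has_fps_expansion_power)
  then have "(\<lambda>x::complex. (1 + 8 * x)^j) has_fps_expansion (1 + 8 * fps_X)^j"
    by (simp add: numeral_fps_const)
  moreover have "(eval_fps F \<circ> (\<lambda>x::complex. -27 * x / (1 - 4 * x)^3)) has_fps_expansion (F oo fps_Z)"
    by (rule has_fps_expansion_compose[OF eval_fps_has_fps_expansion[OF F] has_fps_expansion_fps_Z fps_Z_nth_0])
  ultimately have "(\<lambda>x. (1 + 8 * x)^j * (1 - 4 * x) powr (-A)
      * (eval_fps F \<circ> (\<lambda>x::complex. -27 * x / (1 - 4 * x)^3)) x) has_fps_expansion G"
    unfolding G by (intro has_fps_expansion_mult has_fps_expansion_pow_1m4X)
  then have "fps_conv_radius G > 0"
    and ev_G: "eventually (\<lambda>x. eval_fps G x = (1 + 8 * x)^j * (1 - 4 * x) powr (-A)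
           * eval_fps F (-27 * x / (1 - 4 * x)^3)) (nhds 0)"
    by (auto simp: has_fps_expansion_def)
  have "eventually (\<lambda>x::complex. x \<in> eball 0 (fps_conv_radius G)) (nhds 0)"
    using \<open>fps_conv_radius G > 0\<close> by (intro eventually_nhds_in_open) (auto simp: zero_ereal_def)
  moreover have "eventually (\<lambda>x::complex. x \<in> ball 0 (1/8)) (nhds 0)"
    by (intro eventually_nhds_in_open) auto
  ultimately have "eventually (\<lambda>x. summable (\<lambda>n. G $ n * x ^ n) \<and>
      eval_fps F (-27 * x / (1 - 4 * x)^3)
        = inverse ((1 + 8 * x)^j) * (1 - 4 * x) powr A * suminf (\<lambda>n. G $ n * x ^ n)) (nhds 0)"
    using ev_G
  proof eventually_elim
    case (elim x)
    then have sums: "(\<lambda>n. G $ n * x ^ n) sums eval_fps G x"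
      by (intro sums_eval_fps) simp
    have "norm x < 1/8"
      using elim(2) by simp
    have "1 + 8 * x \<noteq> 0"
    proof
      assume "1 + 8 * x = 0"
      then have "x = -1/8"
        by (simp add: field_simps add_eq_0_iff)
      with \<open>norm x < 1/8\<close> show False
        by simp
    qed
    have "1 - 4 * x \<noteq> 0"
    proof
      assume "1 - 4 * x = 0"
      then have "x = 1/4"
        by (simp add: field_simps)
      with \<open>norm x < 1/8\<close> show False
        by simp
    qed
    then have powr: "(1 - 4 * x) powr A * (1 - 4 * x) powr (-A) = 1"
      by (simp add: powr_add[symmetric])
    have "inverse ((1 + 8 * x)^j) * (1 - 4 * x) powr A * suminf (\<lambda>n. G $ n * x ^ n)
        = inverse ((1 + 8 * x)^j) * (1 - 4 * x) powr A
          * ((1 + 8 * x)^j * (1 - 4 * x) powr (-A) * eval_fps F (-27 * x / (1 - 4 * x)^3))"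
      using sums elim(3) by (simp add: sums_iff)
    also have "\<dots> = eval_fps F (-27 * x / (1 - 4 * x)^3) * (inverse ((1 + 8 * x)^j) * (1 + 8 * x)^j)
        * ((1 - 4 * x) powr A * (1 - 4 * x) powr (-A))"
      by (simp add: algebra_simps)
    also have "\<dots> = eval_fps F (-27 * x / (1 - 4 * x)^3)"
      using \<open>1 + 8 * x \<noteq> 0\<close> powr by simp
    finally show ?case
      using sums by (auto simp: sums_iff)
  qed
  then show ?thesis
    by (simp only: eventually_nhds_metric dist_norm diff_zero)
qed

primrec Q3_poly :: "nat \<Rightarrow> complex \<Rightarrow> complex \<Rightarrow> complex poly" where
  "Q3_poly 0 a b = [:1, 3/a:]"
| "Q3_poly (Suc k) a b = smult (1 / (a * (1/2 - of_nat (Suc k) - b) * (1/2 - of_nat (Suc k) + b)))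
     (smult (1 / (2 * of_nat (Suc k) + a))
        ([:2 * of_nat (Suc k) + a, 3:] * [:a, 1:] * [:1/2 - of_nat (Suc k) - b, 1:]
          * [:1/2 - of_nat (Suc k) + b, 1:]) * Q3_poly k (a + 1) b
    + smult (8 / (2 * of_nat (Suc k) + a))
        ([:a - 4 * of_nat (Suc k), 3:] * [:0, 1:] * [:-1/4 + of_nat (Suc k)/2 + a/2 + b/2, 1:]
          * [:-1/4 + of_nat (Suc k)/2 + a/2 - b/2, 1:])
        * pcompose (Q3_poly k (a + 1) b) [:-1, 1:])"

lemma poly_Q3_poly: "poly (Q3_poly k a b) n = Q3 k n a b"
proof (induction k arbitrary: a n)
  case 0
  then show ?case
    by (simp add: divide_inverse algebra_simps)
next
  case (Suc k)
  define K :: complex where "K = of_nat (Suc k)"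
  have l: "poly [:2 * K + a, 3:] n = 3 * n + 2 * K + a" "poly [:a, 1:] n = n + a"
     "poly [:1/2 - K - b, 1:] n = n + 1/2 - K - b" "poly [:1/2 - K + b, 1:] n = n + 1/2 - K + b"
     "poly [:a - 4 * K, 3:] n = 3 * n - 4 * K + a" "poly [:0, 1:] n = n"
     "poly [:-1/4 + K/2 + a/2 + b/2, 1:] n = n - 1/4 + K/2 + a/2 + b/2"
     "poly [:-1/4 + K/2 + a/2 - b/2, 1:] n = n - 1/4 + K/2 + a/2 - b/2"
    by (simp_all add: algebra_simps)
  have pc: "poly (pcompose (Q3_poly k (a + 1) b) [:-1, 1:]) n = Q3 k (n - 1) (a + 1) b"
    by (simp add: poly_pcompose Suc.IH)
  have "1 / D * (1 / B * (x1 * x2 * x3 * x4) * Q + 8 / B * (y1 * y2 * y3 * y4) * R)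
      = (x1 / B * x2 * x3 * x4 * Q + 8 * y1 / B * y2 * y3 * y4 * R) / D"
    for D B x1 x2 x3 x4 y1 y2 y3 y4 Q R :: complex
    by (simp add: divide_inverse algebra_simps)
  then show ?case
    unfolding Q3_poly.simps(2) Q3.simps(2) K_def[symmetric]
    by (simp only: poly_smult poly_mult poly_add l pc Suc.IH)
qed

lemma degree_add_eq_if_coeff_neq_0:
  fixes p q :: "'a::comm_ring_1 poly"
  assumes "degree p \<le> n" "degree q \<le> n" "coeff p n + coeff q n \<noteq> 0"
  shows "degree (p + q) = n"
  using assms by (intro antisym degree_add_le le_degree) simp_all

lemma degree_Q3_poly:
  fixes b :: complex
  assumes b: "\<forall>j::nat. b \<noteq> of_nat j + 1/2 \<and> b \<noteq> - (of_nat j + 1/2)"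
    and a: "\<forall>m::nat. a + of_nat m \<noteq> 0"
  shows "degree (Q3_poly k a b) = 1 + 4 * k"
  using a
proof (induction k arbitrary: a)
  case 0
  then have "a \<noteq> 0"
    by (metis add.right_neutral of_nat_0)
  then show ?case
    by simp
next
  case (Suc k)
  define B where "B = 2 * of_nat (Suc k) + a"
  define Q where "Q = Q3_poly k (a + 1) b"
  define P1 where "P1 = [:B, 3:] * [:a, 1:] * [:1/2 - of_nat (Suc k) - b, 1:] * [:1/2 - of_nat (Suc k) + b, 1:]"
  define P2 where "P2 = [:a - 4 * of_nat (Suc k), 3:] * [:0, 1:] * [:-1/4 + of_nat (Suc k)/2 + a/2 + b/2, 1:]
      * [:-1/4 + of_nat (Suc k)/2 + a/2 - b/2, 1:]"
  have "a \<noteq> 0"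
    using Suc.prems by (metis add.right_neutral of_nat_0)
  have "B \<noteq> 0"
    using Suc.prems[rule_format, of "2 * Suc k"] by (simp add: B_def add_ac)
  have "1/2 - of_nat (Suc k) - b \<noteq> 0" "1/2 - of_nat (Suc k) + b \<noteq> 0"
    using b[rule_format, of k] by (auto simp: algebra_simps)
  have "degree Q = 1 + 4 * k"
    using Suc.IH Suc.prems by (simp add: Q_def) (metis add.assoc of_nat_Suc add.commute)
  then have degQc: "degree (pcompose Q [:-1, 1:]) = 1 + 4 * k"
    by (simp add: degree_pcompose)
  have "Q \<noteq> 0"
    using \<open>degree Q = 1 + 4 * k\<close> by auto
  have lead: "lead_coeff (pcompose Q [:-1, 1:]) = lead_coeff Q"
    using \<open>degree Q = 1 + 4 * k\<close> by (simp add: lead_coeff_comp)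
  have P: "degree P1 = 4" "lead_coeff P1 = 3" "degree P2 = 4" "lead_coeff P2 = 3"
    by (simp_all add: P1_def P2_def degree_mult_eq lead_coeff_mult)
  have "coeff (P1 * Q) (4 + (1 + 4 * k)) = 3 * lead_coeff Q"
    using coeff_mult_degree_sum[of P1 Q] P \<open>degree Q = 1 + 4 * k\<close> by simp
  moreover have "coeff (P2 * pcompose Q [:-1, 1:]) (4 + (1 + 4 * k)) = 3 * lead_coeff Q"
    using coeff_mult_degree_sum[of P2 "pcompose Q [:-1, 1:]"] P degQc lead by simp
  moreover have "1/B * (3 * lead_coeff Q) + 8/B * (3 * lead_coeff Q) = 27 * lead_coeff Q / B"
    by (simp add: divide_inverse algebra_simps)
  moreover have "lead_coeff Q \<noteq> 0"
    using \<open>Q \<noteq> 0\<close> by (rule leading_coeff_neq_0)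
  ultimately have "degree (smult (1/B) P1 * Q + smult (8/B) P2 * pcompose Q [:-1, 1:]) = 4 + (1 + 4 * k)"
    using P \<open>degree Q = 1 + 4 * k\<close> degQc \<open>B \<noteq> 0\<close>
      degree_mult_le[of "smult (1/B) P1" Q] degree_mult_le[of "smult (8/B) P2" "pcompose Q [:-1, 1:]"]
      degree_smult_le[of "1/B" P1] degree_smult_le[of "8/B" P2]
    by (intro degree_add_eq_if_coeff_neq_0) (simp_all add: mult_smult_left)
  then show ?case
    using \<open>a \<noteq> 0\<close> \<open>1/2 - of_nat (Suc k) - b \<noteq> 0\<close> \<open>1/2 - of_nat (Suc k) + b \<noteq> 0\<close>
    unfolding Q3_poly.simps(2) B_def[symmetric] P1_def[symmetric] P2_def[symmetric] Q_def[symmetric]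
    by simp
qed

theorem theorem8:
  fixes a b :: complex and k :: nat
  assumes a_gen: "\<forall>m::nat. a + of_nat m \<noteq> 0"
    and b_gen: "\<forall>j::nat. b \<noteq> of_nat j + 1/2 \<and> b \<noteq> - (of_nat j + 1/2)"
    and low1: "\<forall>m::nat. 3/4 + of_nat k/2 + a/2 + b/2 + of_nat m \<noteq> 0"
    and low2: "\<forall>m::nat. 3/4 + of_nat k/2 + a/2 - b/2 + of_nat m \<noteq> 0"
  shows "(\<exists>p :: complex poly. degree p = 1 + 4* k \<and> (\<forall>n. Q3 k n a b = poly p n))
    \<and> (\<exists>r>0. \<forall>x::complex. norm x < r \<longrightarrow>
         (let c = (\<lambda>n. pochhammer a n * pochhammer (1/2 - of_nat k - b) n
                        * pochhammer (1/2 - of_nat k + b) n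
                      / (fact n * pochhammer (3/4 + of_nat k/2 + a/2 + b/2) n
                                * pochhammer (3/4 + of_nat k/2 + a/2 - b/2) n)
                      * Q3 k (of_nat n) a b * x ^ n)
          in summable c \<and>
             hyp3F2 (1/3 + 2* of_nat k/3 + a/3) (2/3 + 2* of_nat k/3 + a/3) (1 + 2* of_nat k/3 + a/3)
                    (3/4 + of_nat k/2 + a/2 + b/2) (3/4 + of_nat k/2 + a/2 - b/2)
                    (- 27 * x / (1 - 4* x) ^ 3)
             = inverse ((1 + 8* x) ^ (1 + 2* k)) * (1 - 4* x) powr (1 + 2* of_nat k + a) * suminf c))"
proof -
  have poly: "\<exists>p :: complex poly. degree p = 1 + 4 * k \<and> (\<forall>n. Q3 k n a b = poly p n)"
    using degree_Q3_poly[OF b_gen a_gen] poly_Q3_poly by metis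
  define A where "A = 1 + 2 * of_nat k + a"
  define F where "F = hyp3F2_thirds (3/4 + of_nat k/2 + a/2 + b/2) (3/4 + of_nat k/2 + a/2 - b/2) A"
  have "\<forall>m::nat. A + of_nat m \<noteq> 0"
  proof
    fix m :: nat
    have "A + of_nat m = a + of_nat (1 + 2 * k + m)"
      by (simp add: A_def algebra_simps)
    then show "A + of_nat m \<noteq> 0"
      using a_gen by metis
  qed
  then have "fps_conv_radius F > 0"
    using low1 low2 by (simp add: F_def fps_conv_radius_hyp3F2_thirds)
  from fps_compose_identity_eval[OF this
      Q3_series_closed_form[OF b_gen a_gen low1 low2, folded A_def, folded F_def]]
  obtain r where "r > 0" and r: "\<forall>x::complex. norm x < r \<longrightarrow> summable (\<lambda>n. Q3_series k a b $ n * x ^ n) \<and>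
      eval_fps F (-27 * x / (1 - 4 * x)^3)
        = inverse ((1 + 8 * x)^(2 * k + 1)) * (1 - 4 * x) powr A * suminf (\<lambda>n. Q3_series k a b $ n * x ^ n)"
    by blast
  have thirds: "A/3 = 1/3 + 2 * of_nat k/3 + a/3" "(A + 1)/3 = 2/3 + 2 * of_nat k/3 + a/3"
    "(A + 2)/3 = 1 + 2 * of_nat k/3 + a/3"
    by (simp_all add: A_def field_simps)
  have "eval_fps F z = hyp3F2 (1/3 + 2 * of_nat k/3 + a/3) (2/3 + 2 * of_nat k/3 + a/3)
      (1 + 2 * of_nat k/3 + a/3) (3/4 + of_nat k/2 + a/2 + b/2) (3/4 + of_nat k/2 + a/2 - b/2) z" for z
    unfolding F_def hyp3F2_thirds_def eval_fps_hyp3F2_fps thirds ..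
  moreover have "Q3_series k a b $ n * x ^ n = pochhammer a n * pochhammer (1/2 - of_nat k - b) n
      * pochhammer (1/2 - of_nat k + b) n / (fact n * pochhammer (3/4 + of_nat k/2 + a/2 + b/2) n
      * pochhammer (3/4 + of_nat k/2 + a/2 - b/2) n) * Q3 k (of_nat n) a b * x ^ n" for n and x :: complex
    by (simp add: Q3_series_def Q3_weight_def)
  ultimately show ?thesis
    using poly \<open>r > 0\<close> r unfolding Let_def A_def by (auto simp: add.commute)
qed
end
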